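(* Let $R$ be an associative ring with unity, $\sigma$ an endomorphism of $R$ and $\delta$ a $\sigma$-derivation of $R$. Assume that $Re$ is $(\sigma,\delta)$-stable for all $e\in\mathcal{S}_\ell(R)$ and that $R$ satisfies the condition $(\mathcal{C}_\sigma)$. If $R$ is right p.q.-Baer, then the Ore extension $R[x;\sigma,\delta]$ is right p.q.-Baer.
   Context: A $\sigma$-derivation is an additive map $\delta$ with $\delta(ab)=\sigma(a)\delta(b)+\delta(a)b$. $R[x;\sigma,\delta]$ is the ring of polynomials $\sum a_ix^i$ ($a_i\in R$, coefficients on the left) with multiplication determined by that of $R$ and $xa=\sigma(a)x+\delta(a)$. $\mathcal{S}_\ell(R)$ is the set of idempotents $e$ with $ere=re$ for all $r\in R$. A subset $X$ is $(\sigma,\delta)$-stable if $\sigma(X)\subseteq X$ and $\delta(X)\subseteq X$. $R$ satisfies $(\mathcal{C}_\sigma)$ if $a\sigma(b)=0$ implies $ab=0$ for all $a,b\in R$. A ring $T$ is right p.q.-Baer if the right annihilator $r_T(aT)=\{t\in T\mid aTt=0\}$ of every principal right ideal $aT$ is generated (as a right ideal) by an idempotent. *)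

theory Defs
  imports "HOL-Computational_Algebra.Polynomial"
begin

definition ring_endo :: "('a::ring_1 \<Rightarrow> 'a) \<Rightarrow> bool" where
  "ring_endo \<sigma> \<longleftrightarrow> (\<forall>a b. \<sigma> (a + b) = \<sigma> a + \<sigma> b) \<and>
                   (\<forall>a b. \<sigma> (a * b) = \<sigma> a * \<sigma> b) \<and> \<sigma> 1 = 1"

definition sigma_derivation :: "('a::ring_1 \<Rightarrow> 'a) \<Rightarrow> ('a \<Rightarrow> 'a) \<Rightarrow> bool" where
  "sigma_derivation \<sigma> \<delta> \<longleftrightarrow> (\<forall>a b. \<delta> (a + b) = \<delta> a + \<delta> b) \<and>
                   (\<forall>a b. \<delta> (a * b) = \<sigma> a * \<delta> b + \<delta> a * b)"

text \<open>Coefficients of x^n a = sum_k (xcoef n a k) x^k in R[x;sigma,delta],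
  computed from x c = sigma(c) x + delta(c).\<close>
fun xcoef :: "('a::ring_1 \<Rightarrow> 'a) \<Rightarrow> ('a \<Rightarrow> 'a) \<Rightarrow> nat \<Rightarrow> 'a \<Rightarrow> nat \<Rightarrow> 'a" where
  "xcoef \<sigma> \<delta> 0 a k = (if k = 0 then a else 0)"
| "xcoef \<sigma> \<delta> (Suc n) a k =
     (if k = 0 then 0 else \<sigma> (xcoef \<sigma> \<delta> n a (k - 1))) + \<delta> (xcoef \<sigma> \<delta> n a k)"

text \<open>Multiplication of the Ore extension R[x;sigma,delta] on polynomials
  with left coefficients (sum p_i x^i)(sum q_j x^j) = sum p_i (x^i q_j) x^j.\<close>
definition ore_mult :: "('a::ring_1 \<Rightarrow> 'a) \<Rightarrow> ('a \<Rightarrow> 'a) \<Rightarrow> 'a poly \<Rightarrow> 'a poly \<Rightarrow> 'a poly" where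
  "ore_mult \<sigma> \<delta> p q =
     (\<Sum>i\<le>degree p. \<Sum>j\<le>degree q. \<Sum>k\<le>i.
        monom (coeff p i * xcoef \<sigma> \<delta> i (coeff q j) k) (k + j))"

definition S_l :: "'a::ring_1 set" where
  "S_l = {e. e * e = e \<and> (\<forall>r. e * r * e = r * e)}"

definition sd_stable :: "('a \<Rightarrow> 'a) \<Rightarrow> ('a \<Rightarrow> 'a) \<Rightarrow> 'a set \<Rightarrow> bool" where
  "sd_stable \<sigma> \<delta> X \<longleftrightarrow> \<sigma> ` X \<subseteq> X \<and> \<delta> ` X \<subseteq> X"

definition cond_C_sigma :: "('a::ring_1 \<Rightarrow> 'a) \<Rightarrow> bool" where
  "cond_C_sigma \<sigma> \<longleftrightarrow> (\<forall>a b. a * \<sigma> b = 0 \<longrightarrow> a * b = 0)"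

text \<open>Right p.q.-Baer for a ring given by its multiplication and zero (carrier = whole type):
  for every a, r(aT) = {t. a T t = 0} equals eT for some idempotent e.\<close>
definition right_pq_Baer :: "('b \<Rightarrow> 'b \<Rightarrow> 'b) \<Rightarrow> 'b \<Rightarrow> bool" where
  "right_pq_Baer mul z \<longleftrightarrow>
     (\<forall>a. \<exists>e. mul e e = e \<and> {t. \<forall>s. mul (mul a s) t = z} = range (mul e))"

end

theory Submission imports Defs begin

text \<open>The key fact is that \<open>f T g = 0\<close> forces \<open>f\<^sub>i R g\<^sub>j = 0\<close> for
  all coefficients; it is proved by induction on \<open>deg f + deg g\<close>, comparing leading terms with
  the help of \<open>(C\<^sub>\<sigma>)\<close> and splitting \<open>g\<close> along the left semicentral idempotent that
  generates the right annihilator of the leading coefficient of \<open>f\<close>. Hence \<open>r(fT)\<close> consists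
  of the polynomials with coefficients in \<open>\<Inter>\<^sub>i r(f\<^sub>iR) = eR\<close> for a left semicentral
  idempotent \<open>e\<close>; conversely such polynomials are annihilated because \<open>eR\<close> is a
  \<open>(\<sigma>,\<delta>)\<close>-stable ideal. Thus \<open>r(fT) = eT\<close>.\<close>

definition smult_left :: "'a::ring_1 \<Rightarrow> 'a poly \<Rightarrow> 'a poly" where
  "smult_left c p = map_poly (\<lambda>x. c * x) p"

lemma coeff_smult_left [simp]: "coeff (smult_left c p) n = c * coeff p n"
  by (simp add: smult_left_def coeff_map_poly)

lemma smult_left_0 [simp]: "smult_left 0 p = 0" "smult_left c 0 = 0"
  by (simp_all add: poly_eq_iff)

lemma smult_left_add_left: "smult_left (a + b) p = smult_left a p + smult_left b p"
  by (simp add: poly_eq_iff distrib_right)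

lemma smult_left_add_right: "smult_left c (p + q) = smult_left c p + smult_left c q"
  by (simp add: poly_eq_iff distrib_left)

lemma smult_left_diff_right: "smult_left c (p - q) = smult_left c p - smult_left c q"
  by (simp add: poly_eq_iff algebra_simps)

lemma smult_left_smult_left: "smult_left a (smult_left b p) = smult_left (a * b) p"
  by (simp add: poly_eq_iff mult.assoc)

lemma smult_left_sum_right: "smult_left c (\<Sum>i\<in>A. f i) = (\<Sum>i\<in>A. smult_left c (f i))"
  by (induct A rule: infinite_finite_induct) (simp_all add: smult_left_add_right)

lemma degree_smult_left_le: "degree (smult_left c p) \<le> degree p"
  by (rule degree_le) (simp add: coeff_eq_0)

lemma poly_eq_0_or_degree_less:
  assumes "\<And>k. n \<le> k \<Longrightarrow> coeff q k = 0"
  shows "q = 0 \<or> degree q < n"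
  using assms leading_coeff_0_iff not_le_imp_less by blast

subsection \<open>Left semicentral idempotents\<close>

lemma S_l_iff: "e \<in> S_l \<longleftrightarrow> e * e = e \<and> (\<forall>r. e * r * e = r * e)"
  by (simp add: S_l_def)

lemma mem_range_mult_idem_iff:
  fixes e :: "'a::semigroup_mult"
  assumes "e * e = e"
  shows "y \<in> range ((*) e) \<longleftrightarrow> e * y = y"
proof
  assume "y \<in> range ((*) e)"
  then obtain z where "y = e * z" by blast
  then show "e * y = y" using assms by (simp flip: mult.assoc)
next
  assume "e * y = y"
  then show "y \<in> range ((*) e)" using rangeI[of "(*) e" y] by simp
qed

lemma left_mult_mem_range_mult_S_l:
  assumes "u \<in> S_l" "y \<in> range ((*) u)"
  shows "w * y \<in> range ((*) u)"
proof -
  obtain z where "y = u * z" using assms(2) by blast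
  then have "w * y = u * (w * u * z)"
    using assms(1) by (metis S_l_iff mult.assoc)
  then show ?thesis by blast
qed

lemma S_l_mult:
  assumes "e \<in> S_l" "e' \<in> S_l"
  shows "e * e' \<in> S_l" and "range ((*) (e * e')) = range ((*) e) \<inter> range ((*) e')"
proof -
  have e: "e * e = e" "\<And>r. e * r * e = r * e" and e': "e' * e' = e'" "\<And>r. e' * r * e' = r * e'"
    using assms by (auto simp: S_l_iff)
  have "(e * e') * (e * e') = e * (e' * e * e')" by (simp add: mult.assoc)
  also have "\<dots> = e * e'" using e(1) e'(2) by (simp flip: mult.assoc)
  finally have idem: "(e * e') * (e * e') = e * e'" .
  have "(e * e') * r * (e * e') = e * (e' * (r * e) * e')" for r by (simp add: mult.assoc)
  also have "\<dots> r = (e * r * e) * e'" for r using e'(2)[of "r * e"] by (simp add: mult.assoc)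
  also have "\<dots> r = r * (e * e')" for r using e(2)[of r] by (simp add: mult.assoc)
  finally show "e * e' \<in> S_l" using idem by (simp add: S_l_iff)
  have "e * e' * y = y \<longleftrightarrow> e * y = y \<and> e' * y = y" for y
  proof
    assume y: "e * e' * y = y"
    then have "e * y = y" using e(1) by (metis mult.assoc)
    moreover have "e' * y = y" using y e'(2)[of e] by (metis mult.assoc)
    ultimately show "e * y = y \<and> e' * y = y" by simp
  qed (simp add: mult.assoc)
  then show "range ((*) (e * e')) = range ((*) e) \<inter> range ((*) e')"
    by (simp add: set_eq_iff mem_range_mult_idem_iff[OF idem] mem_range_mult_idem_iff[OF e(1)]
        mem_range_mult_idem_iff[OF e'(1)])
qed

text \<open>The idempotent generating a right annihilator r(aR) is automatically left semicentral,
  since r(aR) is a two-sided ideal.\<close>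

lemma right_pq_Baer_S_l:
  fixes a :: "'a::ring_1"
  assumes "right_pq_Baer ((*) :: 'a::ring_1 \<Rightarrow> 'a \<Rightarrow> 'a) 0"
  shows "\<exists>e\<in>S_l. {y. \<forall>s. a * s * y = 0} = range ((*) e)"
proof -
  obtain e :: 'a where e: "e * e = e" and ann: "{y. \<forall>s. a * s * y = 0} = range ((*) e)"
    using assms unfolding right_pq_Baer_def by blast
  have ann_iff: "(\<forall>s. a * s * y = 0) \<longleftrightarrow> e * y = y" for y
    using ann mem_range_mult_idem_iff[OF e] by blast
  have "a * s * e = 0" for s
    using ann_iff e by blast
  then have "a * s * (r * e) = 0" for s r
    by (metis mult.assoc)
  then have "e * (r * e) = r * e" for r
    using ann_iff by blast
  then have "e * r * e = r * e" for r
    by (simp add: mult.assoc)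
  with e ann show ?thesis by (auto simp: S_l_iff)
qed

lemma right_pq_Baer_S_l_finite:
  fixes a :: "'i \<Rightarrow> 'a::ring_1"
  assumes "right_pq_Baer ((*) :: 'a::ring_1 \<Rightarrow> 'a \<Rightarrow> 'a) 0" "finite I"
  shows "\<exists>e\<in>S_l. {y. \<forall>i\<in>I. \<forall>s. a i * s * y = 0} = range ((*) e)"
  using assms(2)
proof (induction I rule: finite_induct)
  case empty
  have "(1::'a) \<in> S_l" by (simp add: S_l_iff)
  then show ?case by (intro bexI[of _ 1]) auto
next
  case (insert i I)
  then obtain e where "e \<in> S_l" "{y. \<forall>i\<in>I. \<forall>s. a i * s * y = 0} = range ((*) e)"
    by blast
  moreover obtain e' where "e' \<in> S_l" "{y. \<forall>s. a i * s * y = 0} = range ((*) e')"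
    using right_pq_Baer_S_l[OF assms(1)] by blast
  ultimately show ?case
    using S_l_mult[of e' e] by (intro bexI[of _ "e' * e"]) auto
qed

subsection \<open>The multiplication of the Ore extension\<close>

lemma cond_C_sigma_funpow:
  assumes "cond_C_sigma \<sigma>" "a * (\<sigma> ^^ m) c = 0"
  shows "a * c = 0"
  using assms(2)
proof (induction m arbitrary: c)
  case (Suc m)
  then have "a * \<sigma> c = 0" by (simp add: funpow_Suc_right del: funpow.simps)
  then show ?case using assms(1) by (simp add: cond_C_sigma_def)
qed simp

locale ore_extension =
  fixes \<sigma> \<delta> :: "'a::ring_1 \<Rightarrow> 'a"
  assumes endo: "ring_endo \<sigma>" and der: "sigma_derivation \<sigma> \<delta>"
begin

abbreviation ore_times :: "'a poly \<Rightarrow> 'a poly \<Rightarrow> 'a poly" (infixl "\<odot>" 70)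
  where "p \<odot> q \<equiv> ore_mult \<sigma> \<delta> p q"

lemma sigma_add: "\<sigma> (a + b) = \<sigma> a + \<sigma> b"
  and sigma_mult: "\<sigma> (a * b) = \<sigma> a * \<sigma> b"
  using endo by (simp_all add: ring_endo_def)

lemma delta_add: "\<delta> (a + b) = \<delta> a + \<delta> b"
  and delta_mult: "\<delta> (a * b) = \<sigma> a * \<delta> b + \<delta> a * b"
  using der by (simp_all add: sigma_derivation_def)

lemma sigma_0 [simp]: "\<sigma> 0 = 0"
  and delta_0 [simp]: "\<delta> 0 = 0"
  using sigma_add[of 0 0] delta_add[of 0 0] by simp_all

lemma sigma_sum: "\<sigma> (\<Sum>i\<in>A. f i) = (\<Sum>i\<in>A. \<sigma> (f i))"
  and delta_sum: "\<delta> (\<Sum>i\<in>A. f i) = (\<Sum>i\<in>A. \<delta> (f i))"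
  using sum_comp_morphism[of \<sigma> f A] sum_comp_morphism[of \<delta> f A] sigma_add delta_add
  by (simp_all add: o_def)

lemma funpow_sigma_mult: "(\<sigma> ^^ m) (a * b) = (\<sigma> ^^ m) a * (\<sigma> ^^ m) b"
  by (induct m) (simp_all add: sigma_mult)

text \<open>Left multiplication by \<open>x\<close>, following \<open>x c = \<sigma>(c) x + \<delta>(c)\<close>.\<close>

definition xmult :: "'a poly \<Rightarrow> 'a poly" where
  "xmult q = pCons 0 (map_poly \<sigma> q) + map_poly \<delta> q"

lemma coeff_xmult:
  "coeff (xmult q) n = (if n = 0 then 0 else \<sigma> (coeff q (n - 1))) + \<delta> (coeff q n)"
  by (simp add: xmult_def coeff_map_poly coeff_pCons')

lemma xmult_add: "xmult (p + q) = xmult p + xmult q"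
  by (simp add: poly_eq_iff coeff_xmult sigma_add delta_add algebra_simps)

lemma xmult_0 [simp]: "xmult 0 = 0"
  using xmult_add[of 0 0] by simp

lemma xmult_sum: "xmult (\<Sum>i\<in>A. f i) = (\<Sum>i\<in>A. xmult (f i))"
  using sum_comp_morphism[of xmult f A] xmult_add by (simp add: o_def)

lemma xmult_pow_add: "(xmult ^^ i) (p + q) = (xmult ^^ i) p + (xmult ^^ i) q"
  by (induct i) (simp_all add: xmult_add)

lemma xmult_pow_diff: "(xmult ^^ i) (p - q) = (xmult ^^ i) p - (xmult ^^ i) q"
  using xmult_pow_add[of i "p - q" q] by (simp add: algebra_simps)

lemma xmult_smult_left: "xmult (smult_left b h) = smult_left (\<sigma> b) (xmult h) + smult_left (\<delta> b) h"
  by (simp add: poly_eq_iff coeff_xmult sigma_mult delta_mult algebra_simps)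

lemma degree_xmult: "degree (xmult q) \<le> Suc (degree q)"
  by (rule degree_le) (auto simp: coeff_xmult coeff_eq_0)

lemma degree_xmult_pow: "degree ((xmult ^^ i) q) \<le> degree q + i"
  by (induct i) (auto intro: order.trans[OF degree_xmult])

lemma coeff_xmult_pow_top:
  "degree q \<le> N \<Longrightarrow> coeff ((xmult ^^ i) q) (N + i) = (\<sigma> ^^ i) (coeff q N)"
proof (induct i)
  case (Suc i)
  then have "degree ((xmult ^^ i) q) \<le> N + i"
    using degree_xmult_pow[of i q] by simp
  then show ?case
    using Suc by (simp add: coeff_xmult coeff_eq_0)
qed simp

lemma xcoef_eq_0: "i < k \<Longrightarrow> xcoef \<sigma> \<delta> i c k = 0"
  by (induct i arbitrary: k) auto

lemma coeff_xmult_pow: "coeff ((xmult ^^ i) q) n =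
   (\<Sum>j\<le>degree q. if j \<le> n then xcoef \<sigma> \<delta> i (coeff q j) (n - j) else 0)"
proof (induct i arbitrary: n)
  case 0
  have "(\<Sum>j\<le>degree q. if j \<le> n then xcoef \<sigma> \<delta> 0 (coeff q j) (n - j) else 0)
      = (\<Sum>j\<le>degree q. if j = n then coeff q j else 0)"
    by (rule sum.cong) auto
  also have "\<dots> = coeff q n" by (auto simp: coeff_eq_0)
  finally show ?case by simp
next
  case (Suc i)
  have "coeff ((xmult ^^ Suc i) q) n =
      (\<Sum>j\<le>degree q. (if n = 0 then 0 else
          \<sigma> (if j \<le> n - Suc 0 then xcoef \<sigma> \<delta> i (coeff q j) (n - Suc 0 - j) else 0))
        + \<delta> (if j \<le> n then xcoef \<sigma> \<delta> i (coeff q j) (n - j) else 0))"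
    by (simp add: coeff_xmult Suc sigma_sum delta_sum sum.distrib)
  also have "\<dots> = (\<Sum>j\<le>degree q. if j \<le> n then xcoef \<sigma> \<delta> (Suc i) (coeff q j) (n - j) else 0)"
    by (intro sum.cong refl, cases "j < n"; cases "j = n") (auto simp: diff_diff_add)
  finally show ?case .
qed

text \<open>The defining formula of \<open>ore_mult\<close> is the expansion of
  \<open>\<Sum>i. p\<^sub>i x\<^sup>i q\<close>; computing \<open>x\<^sup>i q\<close> with \<open>xmult\<close> makes it
  accessible to induction.\<close>

lemma ore_mult_eq_sum: "p \<odot> q = (\<Sum>i\<le>degree p. smult_left (coeff p i) ((xmult ^^ i) q))"
proof (rule poly_eqI)
  fix n
  have shift: "(\<Sum>k\<le>i. if k + j = n then F k else 0) = (if j \<le> n \<and> n - j \<le> i then F (n - j) else 0)"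
    for i j and F :: "nat \<Rightarrow> 'a"
  proof -
    have "(\<Sum>k\<le>i. if k + j = n then F k else 0) = (\<Sum>k\<le>i. if k = n - j \<and> j \<le> n then F k else 0)"
      by (intro sum.cong) auto
    then show ?thesis by (cases "j \<le> n") (auto simp: sum.delta)
  qed
  have "coeff (p \<odot> q) n = (\<Sum>i\<le>degree p. \<Sum>j\<le>degree q. \<Sum>k\<le>i.
        if k + j = n then coeff p i * xcoef \<sigma> \<delta> i (coeff q j) k else 0)"
    by (simp add: ore_mult_def coeff_sum)
  also have "\<dots> = (\<Sum>i\<le>degree p. \<Sum>j\<le>degree q.
        coeff p i * (if j \<le> n then xcoef \<sigma> \<delta> i (coeff q j) (n - j) else 0))"
    by (intro sum.cong refl) (auto simp: shift xcoef_eq_0)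
  also have "\<dots> = coeff (\<Sum>i\<le>degree p. smult_left (coeff p i) ((xmult ^^ i) q)) n"
    by (simp add: coeff_sum coeff_xmult_pow sum_distrib_left)
  finally show "coeff (p \<odot> q) n = \<dots>" .
qed

lemma ore_mult_eq_sum_bound:
  "degree p \<le> N \<Longrightarrow> p \<odot> q = (\<Sum>i\<le>N. smult_left (coeff p i) ((xmult ^^ i) q))"
  unfolding ore_mult_eq_sum
  by (rule sum.mono_neutral_right[symmetric]) (auto simp: coeff_eq_0)

lemma ore_mult_0 [simp]: "0 \<odot> q = 0"
  by (simp add: ore_mult_eq_sum)

lemma ore_mult_add_left: "(p + r) \<odot> q = p \<odot> q + r \<odot> q"
proof -
  let ?N = "max (degree p) (degree r)"
  have "degree (p + r) \<le> ?N" by (rule degree_add_le) auto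
  then show ?thesis
    by (simp add: ore_mult_eq_sum_bound[of _ ?N] smult_left_add_left sum.distrib)
qed

lemma ore_mult_diff_left: "(p - r) \<odot> q = p \<odot> q - r \<odot> q"
  using ore_mult_add_left[of "p - r" r q] by (simp add: algebra_simps)

lemma ore_mult_sum_left: "(\<Sum>i\<in>A. f i) \<odot> q = (\<Sum>i\<in>A. f i \<odot> q)"
  by (induct A rule: infinite_finite_induct) (simp_all add: ore_mult_add_left)

lemma ore_mult_smult_left: "smult_left c p \<odot> q = smult_left c (p \<odot> q)"
  by (simp add: ore_mult_eq_sum_bound[OF degree_smult_left_le] ore_mult_eq_sum[of p q]
      smult_left_sum_right smult_left_smult_left)

lemma ore_mult_diff_right: "p \<odot> (q - r) = p \<odot> q - p \<odot> r"
  by (simp add: ore_mult_eq_sum xmult_pow_diff smult_left_diff_right sum_subtractf)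

lemma const_ore_mult: "[:c:] \<odot> q = smult_left c q"
proof -
  have "[:c:] \<odot> q = (\<Sum>i\<le>0. smult_left (coeff [:c:] i) ((xmult ^^ i) q))"
    by (rule ore_mult_eq_sum_bound) simp
  then show ?thesis by simp
qed

lemma xmult_ore_mult: "xmult (p \<odot> r) = xmult p \<odot> r"
proof -
  let ?N = "degree p" and ?T = "\<lambda>c i. smult_left c ((xmult ^^ i) r)"
  have "xmult (p \<odot> r) = (\<Sum>i\<le>?N. ?T (\<sigma> (coeff p i)) (Suc i)) + (\<Sum>i\<le>?N. ?T (\<delta> (coeff p i)) i)"
    by (simp add: ore_mult_eq_sum xmult_sum xmult_smult_left sum.distrib)
  also have "(\<Sum>i\<le>?N. ?T (\<sigma> (coeff p i)) (Suc i))
      = (\<Sum>i\<le>Suc ?N. ?T (if i = 0 then 0 else \<sigma> (coeff p (i - 1))) i)"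
    by (subst sum.atMost_Suc_shift) simp
  also have "(\<Sum>i\<le>?N. ?T (\<delta> (coeff p i)) i) = (\<Sum>i\<le>Suc ?N. ?T (\<delta> (coeff p i)) i)"
    by (simp add: coeff_eq_0)
  also have "(\<Sum>i\<le>Suc ?N. ?T (if i = 0 then 0 else \<sigma> (coeff p (i - 1))) i)
      + (\<Sum>i\<le>Suc ?N. ?T (\<delta> (coeff p i)) i) = (\<Sum>i\<le>Suc ?N. ?T (coeff (xmult p) i) i)"
    by (simp add: coeff_xmult smult_left_add_left sum.distrib)
  also have "\<dots> = xmult p \<odot> r"
    by (rule ore_mult_eq_sum_bound[symmetric]) (rule degree_xmult)
  finally show ?thesis .
qed

lemma ore_mult_assoc: "p \<odot> q \<odot> r = p \<odot> (q \<odot> r)"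
proof -
  have xmult_pow: "(xmult ^^ i) (q \<odot> r) = (xmult ^^ i) q \<odot> r" for i
    by (induct i) (simp_all add: xmult_ore_mult)
  have "p \<odot> (q \<odot> r) = (\<Sum>i\<le>degree p. smult_left (coeff p i) ((xmult ^^ i) q) \<odot> r)"
    by (simp add: ore_mult_eq_sum[of p] xmult_pow ore_mult_smult_left)
  also have "\<dots> = p \<odot> q \<odot> r"
    by (simp add: ore_mult_sum_left ore_mult_eq_sum[of p q])
  finally show ?thesis by simp
qed

lemma ore_mult_leading_term:
  assumes "degree p \<le> M" "degree q \<le> N"
  shows "degree (p \<odot> q) \<le> M + N" and "coeff (p \<odot> q) (M + N) = coeff p M * (\<sigma> ^^ M) (coeff q N)"
proof -
  have coeff: "coeff (p \<odot> q) n = (\<Sum>i\<le>M. coeff p i * coeff ((xmult ^^ i) q) n)" for n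
    by (simp add: ore_mult_eq_sum_bound[OF assms(1)] coeff_sum)
  have high: "coeff ((xmult ^^ i) q) n = 0" if "N + i < n" for i n
    using degree_xmult_pow[of i q] assms(2) that by (intro coeff_eq_0) simp
  show "degree (p \<odot> q) \<le> M + N"
    by (rule degree_le) (simp add: coeff high)
  have "coeff (p \<odot> q) (M + N) = coeff p M * coeff ((xmult ^^ M) q) (M + N)
      + (\<Sum>i\<in>{..M} - {M}. coeff p i * coeff ((xmult ^^ i) q) (M + N))"
    by (simp add: coeff sum.remove[of "{..M}" M])
  also have "(\<Sum>i\<in>{..M} - {M}. coeff p i * coeff ((xmult ^^ i) q) (M + N)) = 0"
    by (rule sum.neutral) (auto simp: high)
  finally show "coeff (p \<odot> q) (M + N) = coeff p M * (\<sigma> ^^ M) (coeff q N)"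
    using coeff_xmult_pow_top[OF assms(2), of M] by (simp add: add.commute)
qed

lemma lead_coeff_annihilates:
  assumes "cond_C_sigma \<sigma>" "\<And>s. f \<odot> s \<odot> g = 0"
  shows "lead_coeff f * r * lead_coeff g = 0"
proof -
  let ?m = "degree f" and ?n = "degree g" and ?p = "f \<odot> [:r:]"
  have p: "degree ?p \<le> ?m" "coeff ?p ?m = lead_coeff f * (\<sigma> ^^ ?m) r"
    using ore_mult_leading_term[of f ?m "[:r:]" 0] by simp_all
  have "coeff (?p \<odot> g) (?m + ?n) = coeff ?p ?m * (\<sigma> ^^ ?m) (lead_coeff g)"
    using ore_mult_leading_term(2)[OF p(1), of g ?n] by simp
  then have "lead_coeff f * (\<sigma> ^^ ?m) (r * lead_coeff g) = 0"
    using assms(2)[of "[:r:]"] p(2) by (simp add: funpow_sigma_mult mult.assoc)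
  then show ?thesis
    using cond_C_sigma_funpow[OF assms(1)] by (simp add: mult.assoc)
qed

lemma coeff_xmult_pow_mem:
  assumes "sd_stable \<sigma> \<delta> U" "0 \<in> U" "\<And>y z. y \<in> U \<Longrightarrow> z \<in> U \<Longrightarrow> y + z \<in> U"
    and "\<And>n. coeff q n \<in> U"
  shows "coeff ((xmult ^^ i) q) n \<in> U"
  using assms unfolding sd_stable_def
  by (induct i arbitrary: n) (auto simp: coeff_xmult image_subset_iff)

lemma sd_stable_range_mult_S_l:
  assumes "u \<in> S_l" "sd_stable \<sigma> \<delta> (range (\<lambda>r. r * u))"
  shows "sd_stable \<sigma> \<delta> (range ((*) u))"
proof -
  have semicentral: "u * r * u = r * u" for r using assms(1) by (simp add: S_l_iff)
  obtain r1 r2 where r1: "\<sigma> u = r1 * u" and r2: "\<delta> u = r2 * u"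
    using assms(2) unfolding sd_stable_def by (metis image_subset_iff mult_1 rangeE rangeI)
  have "\<sigma> (u * z) = u * r1 * u * \<sigma> z" for z
    by (simp add: sigma_mult r1 semicentral)
  moreover have "\<delta> (u * z) = u * r1 * u * \<delta> z + u * r2 * u * z" for z
    by (simp add: delta_mult r1 r2 semicentral)
  ultimately have "\<sigma> (u * z) = u * (r1 * u * \<sigma> z)" "\<delta> (u * z) = u * (r1 * u * \<delta> z + r2 * u * z)" for z
    by (simp_all add: mult.assoc distrib_left)
  then show ?thesis
    unfolding sd_stable_def by auto
qed

text \<open>Since \<open>uR\<close> is a \<open>(\<sigma>,\<delta>)\<close>-stable ideal, all coefficients of \<open>x\<^sup>i g\<close> stay in
  \<open>uR\<close>, where the coefficients of \<open>f s\<close> vanish.\<close>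

lemma ore_mult_annihilated:
  assumes "u \<in> S_l" "sd_stable \<sigma> \<delta> (range (\<lambda>r. r * u))"
    and "\<And>i. coeff f i * u = 0" and "\<And>n. u * coeff g n = coeff g n"
  shows "f \<odot> s \<odot> g = 0"
proof -
  let ?U = "range ((*) u)"
  have idem: "u * u = u" using assms(1) by (simp add: S_l_iff)
  have g_pow: "coeff ((xmult ^^ i) g) n \<in> ?U" for i n
  proof (rule coeff_xmult_pow_mem)
    show "sd_stable \<sigma> \<delta> ?U" using sd_stable_range_mult_S_l[OF assms(1,2)] .
    show "0 \<in> ?U" by (metis mult_zero_right rangeI)
    show "y + z \<in> ?U" if "y \<in> ?U" "z \<in> ?U" for y z
      using that by (auto simp flip: distrib_left)
    show "coeff g n \<in> ?U" for n using assms(4) by (metis rangeI)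
  qed
  have f_ann: "coeff f k * y = 0" if "y \<in> ?U" for k y
    using that assms(3) by (auto simp flip: mult.assoc)
  have "coeff (f \<odot> s) i * y = 0" if "y \<in> ?U" for i y
    using f_ann left_mult_mem_range_mult_S_l[OF assms(1) that]
    by (simp add: ore_mult_eq_sum coeff_sum sum_distrib_right mult.assoc)
  with g_pow show ?thesis
    by (simp add: ore_mult_eq_sum[of "f \<odot> s"] poly_eq_iff coeff_sum)
qed

lemma ore_annihilates_smult_left:
  assumes "\<And>s. f \<odot> s \<odot> g = 0"
  shows "f \<odot> s \<odot> smult_left c g = 0"
proof -
  have "f \<odot> s \<odot> smult_left c g = f \<odot> (s \<odot> [:c:]) \<odot> g"
    by (simp add: const_ore_mult ore_mult_assoc)
  then show ?thesis using assms by simp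
qed

end

subsection \<open>Right annihilators in the Ore extension\<close>

locale pq_Baer_ore_extension = ore_extension +
  assumes stable: "\<forall>e\<in>S_l. sd_stable \<sigma> \<delta> (range (\<lambda>r. r * e))"
    and cond_C: "cond_C_sigma \<sigma>"
    and pq_Baer: "right_pq_Baer ((*) :: 'a \<Rightarrow> 'a \<Rightarrow> 'a) 0"
begin

text \<open>Induction on \<open>deg f + deg g\<close>: with \<open>uR\<close> the right annihilator
  of the leading coefficient of \<open>f\<close>, split \<open>g = u g + (1 - u) g\<close>; the second part has
  lower degree, and for the first part the leading term of \<open>f\<close> may be dropped.\<close>

lemma coeffs_annihilate_if_ore_annihilates:
  assumes "\<And>s. f \<odot> s \<odot> g = 0"
  shows "coeff f i * r * coeff g j = 0"
  using assms
proof (induction "degree f + degree g" arbitrary: f g i j r rule: less_induct)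
  case less
  have IH: "coeff f' i * r * coeff g' j = 0"
    if "\<And>s. f' \<odot> s \<odot> g' = 0" and "f' = 0 \<or> g' = 0 \<or> degree f' + degree g' < degree f + degree g"
    for f' g' i j r
    using that less.hyps by auto
  define a where "a = lead_coeff f"
  obtain u where u: "u \<in> S_l" and ann: "{y. \<forall>s. a * s * y = 0} = range ((*) u)"
    using right_pq_Baer_S_l[OF pq_Baer] by blast
  have idem: "u * u = u" using u by (simp add: S_l_iff)
  then have ann_iff: "(\<forall>s. a * s * y = 0) \<longleftrightarrow> u * y = y" for y
    using ann mem_range_mult_idem_iff by blast
  have u_lead: "u * lead_coeff g = lead_coeff g"
    using ann_iff[of "lead_coeff g"] lead_coeff_annihilates[OF cond_C less.prems]
    unfolding a_def by blast
  define g1 where "g1 = smult_left u g"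
  define g2 where "g2 = smult_left (1 - u) g"
  have g1: "f \<odot> s \<odot> g1 = 0" for s
    unfolding g1_def by (rule ore_annihilates_smult_left) (rule less.prems)
  have g2: "f \<odot> s \<odot> g2 = 0" for s
  proof -
    have "g2 = g - g1" by (simp add: poly_eq_iff g1_def g2_def algebra_simps)
    then show ?thesis using g1 less.prems by (simp add: ore_mult_diff_right)
  qed
  have "g2 = 0 \<or> degree g2 < degree g"
    by (rule poly_eq_0_or_degree_less)
      (auto simp: g2_def left_diff_distrib u_lead coeff_eq_0 le_less)
  then have g2_smaller: "f = 0 \<or> g2 = 0 \<or> degree f + degree g2 < degree f + degree g"
    by auto
  have g2_ann: "coeff f i * r * coeff g2 j = 0" for i r j
    by (rule IH[OF g2 g2_smaller])
  define f' where "f' = f - monom a (degree f)"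
  have f': "f' \<odot> s \<odot> g1 = 0" for s
  proof -
    have "monom a (degree f) \<odot> s \<odot> g1 = 0"
    proof (rule ore_mult_annihilated[OF u])
      show "sd_stable \<sigma> \<delta> (range (\<lambda>r. r * u))" using stable u by blast
      have "a * u = 0" using ann_iff[of u] idem by (metis mult_1_right)
      then show "coeff (monom a (degree f)) i * u = 0" for i
        by (simp add: coeff_monom)
      show "u * coeff g1 n = coeff g1 n" for n
        using idem by (simp add: g1_def flip: mult.assoc)
    qed
    then show ?thesis using g1 by (simp add: f'_def ore_mult_diff_left)
  qed
  have "f' = 0 \<or> degree f' < degree f"
    by (rule poly_eq_0_or_degree_less) (auto simp: f'_def a_def coeff_eq_0 coeff_monom le_less)
  then have f'_smaller: "f' = 0 \<or> g1 = 0 \<or> degree f' + degree g1 < degree f + degree g"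
    using degree_smult_left_le[of u g] by (auto simp: g1_def)
  have f'_ann: "coeff f' i * r * coeff g1 j = 0" for i r j
    by (rule IH[OF f' f'_smaller])
  have g1_ann: "coeff f i * r * coeff g1 j = 0" for i r j
  proof (cases "i = degree f")
    case True
    have "u * (u * coeff g j) = u * coeff g j" using idem by (simp flip: mult.assoc)
    then have "a * r * (u * coeff g j) = 0" using ann_iff by blast
    then show ?thesis using True by (simp add: a_def g1_def)
  next
    case False
    then have "coeff f' i = coeff f i" by (simp add: f'_def)
    then show ?thesis using f'_ann by metis
  qed
  have "coeff g j = coeff g1 j + coeff g2 j"
    by (simp add: g1_def g2_def algebra_simps)
  then show ?case
    using g1_ann g2_ann by (simp add: distrib_left)
qed

lemma ore_right_annihilator:
  assumes "e \<in> S_l" and ann: "{y. \<forall>i s. coeff f i * s * y = 0} = range ((*) e)"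
  shows "{t. \<forall>s. f \<odot> s \<odot> t = 0} = range ((\<odot>) [:e:])"
proof -
  have idem: "e * e = e" using assms(1) by (simp add: S_l_iff)
  have ann_iff: "(\<forall>i s. coeff f i * s * y = 0) \<longleftrightarrow> e * y = y" for y
    using ann mem_range_mult_idem_iff[OF idem] by blast
  have sub: "t \<in> range ((\<odot>) [:e:])" if "\<forall>s. f \<odot> s \<odot> t = 0" for t
  proof -
    have "e * coeff t j = coeff t j" for j
      using ann_iff coeffs_annihilate_if_ore_annihilates[OF that[rule_format]] by blast
    then have "t = [:e:] \<odot> t" by (simp add: const_ore_mult poly_eq_iff)
    then show ?thesis by (metis rangeI)
  qed
  have sup: "f \<odot> s \<odot> ([:e:] \<odot> h) = 0" for s h
  proof (rule ore_mult_annihilated[OF assms(1)])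
    show "sd_stable \<sigma> \<delta> (range (\<lambda>r. r * e))" using stable assms(1) by blast
    show "coeff f i * e = 0" for i using ann_iff[of e] idem by (metis mult_1_right)
    show "e * coeff ([:e:] \<odot> h) n = coeff ([:e:] \<odot> h) n" for n
      using idem by (simp add: const_ore_mult flip: mult.assoc)
  qed
  show ?thesis
  proof
    show "{t. \<forall>s. f \<odot> s \<odot> t = 0} \<subseteq> range ((\<odot>) [:e:])" using sub by blast
    show "range ((\<odot>) [:e:]) \<subseteq> {t. \<forall>s. f \<odot> s \<odot> t = 0}" using sup by blast
  qed
qed

end

theorem proposition3p2:
  fixes \<sigma> \<delta> :: "'a::ring_1 \<Rightarrow> 'a"
  assumes "ring_endo \<sigma>"
    and "sigma_derivation \<sigma> \<delta>"
    and "\<forall>e\<in>S_l. sd_stable \<sigma> \<delta> (range (\<lambda>r. r * e))"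
    and "cond_C_sigma \<sigma>"
    and "right_pq_Baer ((*) :: 'a \<Rightarrow> 'a \<Rightarrow> 'a) 0"
  shows "right_pq_Baer (ore_mult \<sigma> \<delta>) 0"
proof -
  interpret pq_Baer_ore_extension \<sigma> \<delta>
    by (intro pq_Baer_ore_extension.intro ore_extension.intro pq_Baer_ore_extension_axioms.intro assms)
  have "\<exists>E. E \<odot> E = E \<and> {t. \<forall>s. f \<odot> s \<odot> t = 0} = range ((\<odot>) E)" for f
  proof -
    obtain e where e: "e \<in> S_l"
      and ann: "{y. \<forall>i\<in>{..degree f}. \<forall>s. coeff f i * s * y = 0} = range ((*) e)"
      using right_pq_Baer_S_l_finite[OF assms(5), where I = "{..degree f}" and a = "coeff f"] by auto
    have "coeff f i * s * y = 0" if "\<forall>i\<in>{..degree f}. \<forall>s. coeff f i * s * y = 0" for i s y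
      using that by (cases "i \<le> degree f") (auto simp: coeff_eq_0)
    then have "{y. \<forall>i s. coeff f i * s * y = 0} = range ((*) e)"
      using ann by blast
    then have "{t. \<forall>s. f \<odot> s \<odot> t = 0} = range ((\<odot>) [:e:])"
      by (rule ore_right_annihilator[OF e])
    moreover have "[:e:] \<odot> [:e:] = [:e:]"
      using e by (simp add: const_ore_mult S_l_iff poly_eq_iff coeff_pCons')
    ultimately show ?thesis by blast
  qed
  then show ?thesis unfolding right_pq_Baer_def by blast
qed

end
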